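(* Let $S$ be a memory system satisfying the Data Independence assumption. Then for all $n,m \geq 1$: every trace of $S(n,m)$ is sequentially consistent if and only if every unambiguous trace of $S(n,m)$ is sequentially consistent.
   Context: Notation: $\mathbb{N}_n=\{1,\dots,n\}$, $\mathbb{W}_n=\{0,1,\dots,n\}$, $\mathbb{W}=\{0,1,2,\dots\}$. For $n,m,v\ge 1$ the memory events are $E(n,m,v)=\{R,W\}\times\mathbb{N}_n\times\mathbb{N}_m\times\mathbb{W}_v$ (read events have first component $R$, write events $W$); for $e=\langle a,b,c,d\rangle$ write $op(e)=a$, $proc(e)=b$ (processor), $loc(e)=c$ (location), $data(e)=d$. The value $0$ models the initial value of every location. A memory system is a family $S=(S(n,m,v))_{n,m,v\ge1}$ where $S(n,m,v)$ is a regular set of finite sequences (runs) over an alphabet $E^a(n,m,v)\supseteq E(n,m,v)$ (letters outside $E(n,m,v)$ are internal events); $S(n,m)=\bigcup_{v\ge1}S(n,m,v)$. The trace of a run is its subsequence of memory events; the traces of $S(n,m,v)$ (resp. $S(n,m)$) are the traces of its runs. For a finite sequence $\tau$ of memory events with positions $1,\dots,|\tau|$: $P(\tau,i)=\{k: proc(\tau(k))=i\}$, $L(\tau,j)=\{k: loc(\tau(k))=j\}$, $L^w(\tau,j)=\{k\in L(\tau,j): op(\tau(k))=W\}$. A trace $\tau$ is unambiguous if for every location $j$ and every $x\in L^w(\tau,j)$: $data(\tau(x))\ne0$ and $data(\tau(x))\ne data(\tau(y))$ for all $y\in L^w(\tau,j)\setminus\{x\}$. A renaming function is $\lambda:\mathbb{N}_m\times\mathbb{W}\to\mathbb{W}$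 with $\lambda(j,0)=0$ for all $j$; it induces $\lambda^d(\langle a,b,c,d\rangle)=\langle a,b,c,\lambda(c,d)\rangle$, applied letterwise to sequences. Data Independence assumption: for all $n,m,v\ge1$ and all $\tau\in E(n,m,v)^*$, $\tau$ is a trace of $S(n,m,v)$ iff there are an unambiguous trace $\tau'$ of $S(n,m)$ and a renaming function $\lambda:\mathbb{N}_m\times\mathbb{W}\to\mathbb{W}_v$ with $\tau=\lambda^d(\tau')$. A sequence $\tau$ of memory events is serial if for every position $u$, letting $upto(\tau,u)=\{k\le u: op(\tau(k))=W,\ loc(\tau(k))=loc(\tau(u))\}$, we have $data(\tau(u))=0$ if $upto(\tau,u)=\emptyset$ and $data(\tau(u))=data(\tau(\max upto(\tau,u)))$ otherwise. For processor $i$, $M(\tau,i)=\{\langle u,v\rangle: u,v\in P(\tau,i),\ u<v\}$. The sequence $\tau$ is sequentially consistent if there is a permutation $f$ of $\mathbb{N}_{|\tau|}$ such that (C1) $\langle u,v\rangle\in M(\tau,i)$ for some $i$ implies $f(u)<f(v)$, and (C2) $\tau_{f^{-1}(1)}\tau_{f^{-1}(2)}\cdots\tau_{f^{-1}(|\tau|)}$ is serial. *)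

theory Defs
  imports Main
begin

datatype op = R | W

type_synonym event = "op \<times> nat \<times> nat \<times> nat"

definition opr :: "event \<Rightarrow> op" where "opr e = fst e"
definition proc :: "event \<Rightarrow> nat" where "proc e = fst (snd e)"
definition loc :: "event \<Rightarrow> nat" where "loc e = fst (snd (snd e))"
definition data :: "event \<Rightarrow> nat" where "data e = snd (snd (snd e))"

definition E :: "nat \<Rightarrow> nat \<Rightarrow> nat \<Rightarrow> event set" where
  "E n m v = {e. proc e \<in> {1..n} \<and> loc e \<in> {1..m} \<and> data e \<le> v}"

datatype 'i letter = Mem event | Internal 'i

definition regular :: "'a list set \<Rightarrow> bool" where
  "regular L \<longleftrightarrow> (\<exists>(A::'a set) (Q::nat set) q0 \<delta> F.
     finite A \<and> finite Q \<and> q0 \<in> Q \<and> F \<subseteq> Q \<and>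
     (\<forall>q\<in>Q. \<forall>a\<in>A. \<delta> q a \<in> Q) \<and>
     L = {w. w \<in> lists A \<and> foldl \<delta> q0 w \<in> F})"

definition memory_system :: "(nat \<Rightarrow> nat \<Rightarrow> nat \<Rightarrow> 'i letter list set) \<Rightarrow> bool" where
  "memory_system S \<longleftrightarrow> (\<forall>n m v. n \<ge> 1 \<longrightarrow> m \<ge> 1 \<longrightarrow> v \<ge> 1 \<longrightarrow>
      regular (S n m v) \<and> (\<forall>r \<in> S n m v. \<forall>e. Mem e \<in> set r \<longrightarrow> e \<in> E n m v))"

fun mem_events :: "'i letter list \<Rightarrow> event list" where
  "mem_events [] = []"
| "mem_events (Mem e # r) = e # mem_events r"
| "mem_events (Internal _ # r) = mem_events r"

definition trace :: "'i letter list \<Rightarrow> event list" where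
  "trace r = mem_events r"

definition traces :: "(nat \<Rightarrow> nat \<Rightarrow> nat \<Rightarrow> 'i letter list set) \<Rightarrow> nat \<Rightarrow> nat \<Rightarrow> nat \<Rightarrow> event list set" where
  "traces S n m v = trace ` S n m v"

definition traces_nm :: "(nat \<Rightarrow> nat \<Rightarrow> nat \<Rightarrow> 'i letter list set) \<Rightarrow> nat \<Rightarrow> nat \<Rightarrow> event list set" where
  "traces_nm S n m = (\<Union>v\<in>{v. v \<ge> 1}. traces S n m v)"

section \<open>Positions (lists are 0-indexed: position k of the paper is index k-1)\<close>

definition P :: "event list \<Rightarrow> nat \<Rightarrow> nat set" where
  "P \<tau> i = {k. k < length \<tau> \<and> proc (\<tau> ! k) = i}"

definition L :: "event list \<Rightarrow> nat \<Rightarrow> nat set" where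
  "L \<tau> j = {k. k < length \<tau> \<and> loc (\<tau> ! k) = j}"

definition Lw :: "event list \<Rightarrow> nat \<Rightarrow> nat set" where
  "Lw \<tau> j = {k \<in> L \<tau> j. opr (\<tau> ! k) = W}"

definition unambiguous :: "event list \<Rightarrow> bool" where
  "unambiguous \<tau> \<longleftrightarrow> (\<forall>j. \<forall>x \<in> Lw \<tau> j. data (\<tau> ! x) \<noteq> 0 \<and>
      (\<forall>y \<in> Lw \<tau> j - {x}. data (\<tau> ! x) \<noteq> data (\<tau> ! y)))"

definition renaming :: "nat \<Rightarrow> (nat \<Rightarrow> nat \<Rightarrow> nat) \<Rightarrow> bool" where
  "renaming m lam \<longleftrightarrow> (\<forall>j\<in>{1..m}. lam j 0 = 0)"

definition rename_d :: "(nat \<Rightarrow> nat \<Rightarrow> nat) \<Rightarrow> event \<Rightarrow> event" where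
  "rename_d lam e = (opr e, proc e, loc e, lam (loc e) (data e))"

definition data_independent :: "(nat \<Rightarrow> nat \<Rightarrow> nat \<Rightarrow> 'i letter list set) \<Rightarrow> bool" where
  "data_independent S \<longleftrightarrow> (\<forall>n m v. n \<ge> 1 \<longrightarrow> m \<ge> 1 \<longrightarrow> v \<ge> 1 \<longrightarrow>
     (\<forall>\<tau> \<in> lists (E n m v).
        \<tau> \<in> traces S n m v \<longleftrightarrow>
        (\<exists>\<tau>' lam. \<tau>' \<in> traces_nm S n m \<and> unambiguous \<tau>' \<and> renaming m lam \<and>
            (\<forall>j\<in>{1..m}. \<forall>d. lam j d \<le> v) \<and> \<tau> = map (rename_d lam) \<tau>')))"

definition upto_set :: "event list \<Rightarrow> nat \<Rightarrow> nat set" where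
  "upto_set \<tau> u = {k. k \<le> u \<and> opr (\<tau> ! k) = W \<and> loc (\<tau> ! k) = loc (\<tau> ! u)}"

definition serial :: "event list \<Rightarrow> bool" where
  "serial \<tau> \<longleftrightarrow> (\<forall>u < length \<tau>.
      (if upto_set \<tau> u = {} then data (\<tau> ! u) = 0
       else data (\<tau> ! u) = data (\<tau> ! Max (upto_set \<tau> u))))"

definition M :: "event list \<Rightarrow> nat \<Rightarrow> (nat \<times> nat) set" where
  "M \<tau> i = {(u, v). u \<in> P \<tau> i \<and> v \<in> P \<tau> i \<and> u < v}"

(* f is a permutation of the positions; the permuted sequence places tau!u at f u *)
definition seq_consistent :: "event list \<Rightarrow> bool" where
  "seq_consistent \<tau> \<longleftrightarrow> (\<exists>f. bij_betw f {..<length \<tau>} {..<length \<tau>} \<and>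
      (\<forall>i u v. (u, v) \<in> M \<tau> i \<longrightarrow> f u < f v) \<and>
      serial (map (\<lambda>k. \<tau> ! the_inv_into {..<length \<tau>} f k) [0..<length \<tau>]))"

end

theory Submission
  imports Defs
begin

text \<open>Serial executions are stable under renaming data values, as long as the initial value 0
  stays 0: every event still returns the value of the latest preceding write to its location,
  now renamed. A serialisation witnessing sequential consistency of an unambiguous trace is
  therefore also one for any renaming of it, and by Data Independence every trace arises as such
  a renaming.\<close>

lemma rename_d_simps [simp]:
  "opr (rename_d lam e) = opr e" "proc (rename_d lam e) = proc e"
  "loc (rename_d lam e) = loc e" "data (rename_d lam e) = lam (loc e) (data e)"
  by (simp_all add: rename_d_def opr_def proc_def loc_def data_def)

lemma upto_set_map_rename_d:
  "u < length s \<Longrightarrow> upto_set (map (rename_d lam) s) u = upto_set s u"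
  unfolding upto_set_def by auto

lemma M_map_rename_d: "M (map (rename_d lam) s) i = M s i"
  unfolding M_def P_def by auto

lemma serial_map_rename_d:
  assumes "serial s" and "\<forall>e\<in>set s. lam (loc e) 0 = 0"
  shows "serial (map (rename_d lam) s)"
  unfolding serial_def
proof (intro allI impI)
  fix u assume "u < length (map (rename_d lam) s)"
  then have u: "u < length s" by simp
  let ?U = "upto_set s u"
  have "finite ?U" by (rule finite_subset[of _ "{..u}"]) (auto simp: upto_set_def)
  then have last_write: "Max ?U \<le> u" "loc (s ! Max ?U) = loc (s ! u)" if "?U \<noteq> {}"
    using Max_in[of ?U] that by (auto simp: upto_set_def)
  have "s ! u \<in> set s" using u by simp
  moreover have "if ?U = {} then data (s ! u) = 0 else data (s ! u) = data (s ! Max ?U)"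
    using assms(1) u by (simp add: serial_def)
  ultimately show "if upto_set (map (rename_d lam) s) u = {}
      then data (map (rename_d lam) s ! u) = 0
      else data (map (rename_d lam) s ! u) =
           data (map (rename_d lam) s ! Max (upto_set (map (rename_d lam) s) u))"
    using assms(2) u last_write by (auto simp: upto_set_map_rename_d split: if_splits)
qed

lemma seq_consistent_map_rename_d:
  assumes "seq_consistent t" and "\<forall>e\<in>set t. lam (loc e) 0 = 0"
  shows "seq_consistent (map (rename_d lam) t)"
proof -
  obtain f where f: "bij_betw f {..<length t} {..<length t}"
    "\<forall>i u v. (u, v) \<in> M t i \<longrightarrow> f u < f v"
    "serial (map (\<lambda>k. t ! the_inv_into {..<length t} f k) [0..<length t])"
    using assms(1) unfolding seq_consistent_def by blast
  let ?g = "the_inv_into {..<length t} f"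
  have g: "k < length t \<Longrightarrow> ?g k < length t" for k
    using f(1) by (meson bij_betw_the_inv_into bij_betwE lessThan_iff)
  have "serial (map (rename_d lam) (map (\<lambda>k. t ! ?g k) [0..<length t]))"
    using assms(2) g by (intro serial_map_rename_d[OF f(3)]) auto
  moreover have "map (rename_d lam) (map (\<lambda>k. t ! ?g k) [0..<length t])
      = map (\<lambda>k. map (rename_d lam) t ! ?g k) [0..<length t]"
    using g by auto
  ultimately have "serial (map (\<lambda>k. map (rename_d lam) t ! ?g k) [0..<length t])"
    by argo
  then show ?thesis
    unfolding seq_consistent_def using f(1,2) by (intro exI[of _ f]) (simp add: M_map_rename_d)
qed

lemma set_mem_events: "set (mem_events r) = {e. Mem e \<in> set r}"
  by (induction r rule: mem_events.induct) auto

lemma traces_in_lists_E: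
  assumes "memory_system S" and "n \<ge> 1" "m \<ge> 1" "v \<ge> 1" and "\<tau> \<in> traces S n m v"
  shows "\<tau> \<in> lists (E n m v)"
proof -
  obtain r where "r \<in> S n m v" "\<tau> = trace r"
    using assms(5) unfolding traces_def by blast
  then show ?thesis
    using assms(1-4) by (auto simp: memory_system_def trace_def set_mem_events)
qed

lemma trace_eq_rename_unambiguous_trace:
  assumes "memory_system S" and "data_independent S" and "n \<ge> 1" "m \<ge> 1"
    and "\<tau> \<in> traces_nm S n m"
  obtains \<tau>' lam where "\<tau>' \<in> traces_nm S n m" "unambiguous \<tau>'"
    "\<forall>e\<in>set \<tau>'. lam (loc e) 0 = 0" "\<tau> = map (rename_d lam) \<tau>'"
proof -
  obtain v where v: "v \<ge> 1" "\<tau> \<in> traces S n m v"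
    using assms(5) unfolding traces_nm_def by blast
  then have "\<tau> \<in> lists (E n m v)"
    using traces_in_lists_E assms(1,3,4) by blast
  then obtain \<tau>' lam where \<tau>': "\<tau>' \<in> traces_nm S n m" "unambiguous \<tau>'" "renaming m lam"
      "\<tau> = map (rename_d lam) \<tau>'"
    using assms(2-4) v unfolding data_independent_def by blast
  obtain v' where "v' \<ge> 1" "\<tau>' \<in> traces S n m v'"
    using \<tau>'(1) unfolding traces_nm_def by blast
  then have "\<tau>' \<in> lists (E n m v')"
    using traces_in_lists_E assms(1,3,4) by blast
  then have "\<forall>e\<in>set \<tau>'. lam (loc e) 0 = 0"
    using \<tau>'(3) unfolding renaming_def E_def by auto
  with \<tau>' that show thesis by blast
qed

theorem theorem4p1:
  fixes S :: "nat \<Rightarrow> nat \<Rightarrow> nat \<Rightarrow> 'i letter list set" and n m :: nat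
  assumes "memory_system S" and "data_independent S" and "n \<ge> 1" and "m \<ge> 1"
  shows "(\<forall>\<tau> \<in> traces_nm S n m. seq_consistent \<tau>) \<longleftrightarrow>
         (\<forall>\<tau> \<in> traces_nm S n m. unambiguous \<tau> \<longrightarrow> seq_consistent \<tau>)"
proof
  assume "\<forall>\<tau> \<in> traces_nm S n m. seq_consistent \<tau>"
  then show "\<forall>\<tau> \<in> traces_nm S n m. unambiguous \<tau> \<longrightarrow> seq_consistent \<tau>" by blast
next
  assume unambiguous_sc: "\<forall>\<tau> \<in> traces_nm S n m. unambiguous \<tau> \<longrightarrow> seq_consistent \<tau>"
  show "\<forall>\<tau> \<in> traces_nm S n m. seq_consistent \<tau>"
  proof
    fix \<tau> assume "\<tau> \<in> traces_nm S n m"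
    with assms obtain \<tau>' lam where "\<tau>' \<in> traces_nm S n m" "unambiguous \<tau>'"
        "\<forall>e\<in>set \<tau>'. lam (loc e) 0 = 0" "\<tau> = map (rename_d lam) \<tau>'"
      by (rule trace_eq_rename_unambiguous_trace)
    with unambiguous_sc show "seq_consistent \<tau>"
      using seq_consistent_map_rename_d by blast
  qed
qed

end
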